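(* Consider the most-profitable-augmenting-path algorithm (described in the context) run on an instance of the maximum-weight online bipartite left-perfect matching problem with budget $k=4$, and let $M^\star$ be a maximum-weight left-perfect matching of $G$. Then for each timestep $t\in\{1,\dots,n\}$, $p_t\ge w(u_t,M^\star(u_t))-\ell^t_{M^\star(u_t)}$.
   Context: Problem: $G=(L\cup R,E)$ is a complete bipartite graph with $n:=|L|\le|R|$ and edge weights $w:E\to\mathbb{Q}_{\ge0}$. The algorithm initially knows $R$; at timestep $t=1,\dots,n$ the vertex $u_t\in L$ arrives with all incident edges and their weights. At the end of each timestep the algorithm outputs a left-perfect matching of the revealed graph (every arrived vertex of $L$ matched), obtainable from the previous one (empty initially) by at most $4$ (re)assignments (the number of vertices of nonzero degree in the symmetric difference of the two matchings); matched vertices stay matched. Algorithm: when $u_t$ arrives, among all augmenting paths with respect to the current matching $M$ that contain $u_t$ and have length at most $3$, choose one $P$ maximizing the weight of $M\triangle P$ minus the weight of $M$, and output $M\triangle P$. Notation: $M_t$ is the matching at the beginning of timestep $t$ (output at time $t-1$; $M_1=\emptyset$, $M_{n+1}$ is the final matching); $R^t_{\mathsf{exp}}$ is the set of vertices of $R$ not covered by $M_t$; for a matching $M$, $M(u)$ is the partner of $u$. The marginal profit is $p_t:=\sum_{e\in M_{t+1}}w(e)-\sum_{e\in M_t}w(e)$. For $v\in R$, the loss $\ell^t_v:=w(M_t(v),v)-\max_{v'\in R^t_{\mathsf{exp}}}w(M_t(v),v')$ if $v$ is matched in $M_t$, and $\ell^t_v:=0$ otherwise, with the convention $\max\emptyset:=0$.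 *)

theory Defs
  imports Complex_Main
begin

text \<open>Left vertices have type 'l, right vertices type 'r; vertices of the bipartite
graph are of type ('l + 'r). Edges (and matchings) are sets of pairs (left, right).\<close>

definition is_matching :: "('l \<times> 'r) set \<Rightarrow> bool" where
  "is_matching M \<longleftrightarrow>
     (\<forall>a b b'. (a,b) \<in> M \<longrightarrow> (a,b') \<in> M \<longrightarrow> b = b') \<and>
     (\<forall>a a' b. (a,b) \<in> M \<longrightarrow> (a',b) \<in> M \<longrightarrow> a = a')"

definition left_perfect :: "'l set \<Rightarrow> 'r set \<Rightarrow> ('l \<times> 'r) set \<Rightarrow> bool" where
  "left_perfect A R M \<longleftrightarrow> is_matching M \<and> M \<subseteq> A \<times> R \<and> Domain M = A"

definition mweight :: "('l \<Rightarrow> 'r \<Rightarrow> rat) \<Rightarrow> ('l \<times> 'r) set \<Rightarrow> rat" where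
  "mweight w M = (\<Sum>(a,b)\<in>M. w a b)"

definition partner_L :: "('l \<times> 'r) set \<Rightarrow> 'l \<Rightarrow> 'r" where
  "partner_L M a = (THE b. (a,b) \<in> M)"

definition partner_R :: "('l \<times> 'r) set \<Rightarrow> 'r \<Rightarrow> 'l" where
  "partner_R M b = (THE a. (a,b) \<in> M)"

definition is_edge :: "'l set \<Rightarrow> 'r set \<Rightarrow> ('l + 'r) \<Rightarrow> ('l + 'r) \<Rightarrow> bool" where
  "is_edge A R x y \<longleftrightarrow>
     (\<exists>a b. a \<in> A \<and> b \<in> R \<and> ((x = Inl a \<and> y = Inr b) \<or> (x = Inr b \<and> y = Inl a)))"

fun to_pair :: "('l + 'r) \<Rightarrow> ('l + 'r) \<Rightarrow> 'l \<times> 'r" where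
  "to_pair (Inl a) (Inr b) = (a, b)"
| "to_pair (Inr b) (Inl a) = (a, b)"
| "to_pair _ _ = undefined"

definition pedges :: "('l + 'r) list \<Rightarrow> ('l \<times> 'r) set" where
  "pedges xs = {to_pair (xs ! i) (xs ! Suc i) | i. Suc i < length xs}"

definition covered :: "('l \<times> 'r) set \<Rightarrow> ('l + 'r) \<Rightarrow> bool" where
  "covered M x = (case x of Inl a \<Rightarrow> a \<in> Domain M | Inr b \<Rightarrow> b \<in> Range M)"

text \<open>Its length is the number
  of edges, i.e. length xs - 1.\<close>
definition augmenting_path ::
  "'l set \<Rightarrow> 'r set \<Rightarrow> ('l \<times> 'r) set \<Rightarrow> ('l + 'r) list \<Rightarrow> bool" where
  "augmenting_path A R M xs \<longleftrightarrow>
     2 \<le> length xs \<and> distinct xs \<and>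
     (\<forall>i. Suc i < length xs \<longrightarrow>
        is_edge A R (xs ! i) (xs ! Suc i) \<and>
        (to_pair (xs ! i) (xs ! Suc i) \<in> M \<longleftrightarrow> odd i)) \<and>
     \<not> covered M (hd xs) \<and> \<not> covered M (last xs)"

definition symdiff :: "'a set \<Rightarrow> 'a set \<Rightarrow> 'a set" where
  "symdiff X Y = (X - Y) \<union> (Y - X)"

definition candidate ::
  "'l set \<Rightarrow> 'r set \<Rightarrow> ('l \<times> 'r) set \<Rightarrow> 'l \<Rightarrow> ('l + 'r) list \<Rightarrow> bool" where
  "candidate A R M ut P \<longleftrightarrow>
     augmenting_path A R M P \<and> Inl ut \<in> set P \<and> length P - 1 \<le> 3"

definition path_gain ::
  "('l \<Rightarrow> 'r \<Rightarrow> rat) \<Rightarrow> ('l \<times> 'r) set \<Rightarrow> ('l + 'r) list \<Rightarrow> rat" where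
  "path_gain w M P = mweight w (symdiff M (pedges P)) - mweight w M"

text \<open>One step of the most-profitable-augmenting-path algorithm (ties broken arbitrarily).\<close>
definition alg_step ::
  "'l set \<Rightarrow> 'r set \<Rightarrow> ('l \<Rightarrow> 'r \<Rightarrow> rat) \<Rightarrow> 'l \<Rightarrow> ('l \<times> 'r) set \<Rightarrow> ('l \<times> 'r) set \<Rightarrow> bool" where
  "alg_step A R w ut M M' \<longleftrightarrow>
     (\<exists>P. candidate A R M ut P \<and>
          (\<forall>Q. candidate A R M ut Q \<longrightarrow> path_gain w M Q \<le> path_gain w M P) \<and>
          M' = symdiff M (pedges P))"

text \<open>Ms t is the matching at the beginning of timestep t, u t the vertex arriving at t.\<close>
definition alg_run ::
  "nat \<Rightarrow> (nat \<Rightarrow> 'l) \<Rightarrow> 'r set \<Rightarrow> ('l \<Rightarrow> 'r \<Rightarrow> rat) \<Rightarrow> (nat \<Rightarrow> ('l \<times> 'r) set) \<Rightarrow> bool" where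
  "alg_run n u R w Ms \<longleftrightarrow>
     Ms 1 = {} \<and>
     (\<forall>t\<in>{1..n}. alg_step (u ` {1..t}) R w (u t) (Ms t) (Ms (Suc t)))"

definition R_exp :: "'r set \<Rightarrow> ('l \<times> 'r) set \<Rightarrow> 'r set" where
  "R_exp R M = R - Range M"

text \<open>Loss of v with respect to the current matching M (with max of empty set = 0).\<close>
definition loss ::
  "'r set \<Rightarrow> ('l \<Rightarrow> 'r \<Rightarrow> rat) \<Rightarrow> ('l \<times> 'r) set \<Rightarrow> 'r \<Rightarrow> rat" where
  "loss R w M v =
     (if v \<in> Range M then
        w (partner_R M v) v -
        (if R_exp R M = {} then 0 else Max ((\<lambda>v'. w (partner_R M v) v') ` R_exp R M))
      else 0)"

end

theory Submission
  imports Defs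
begin

(* When u_t arrives, the current matching M_t only covers earlier arrivals, so u_t is free
   and, as |L| <= |R|, some right vertex is still free. Let v be any right vertex. If v is
   free, the single edge u_t v is an augmenting path of gain w(u_t, v). Otherwise v is
   matched to some a, and for a free v' maximising w(a, v') the path u_t v a v' has gain
   w(u_t, v) - loss_v. Both paths are candidates, so the chosen path gains at least as
   much; taking v = M*(u_t) gives the bound. *)

lemma is_matching_empty: "is_matching {}"
  by (simp add: is_matching_def)

lemma is_matching_insert:
  "is_matching M \<Longrightarrow> a \<notin> Domain M \<Longrightarrow> b \<notin> Range M \<Longrightarrow> is_matching (insert (a, b) M)"
  unfolding is_matching_def by blast

lemma is_matching_swap:
  "is_matching M \<Longrightarrow> (a, b) \<in> M \<Longrightarrow> a' \<notin> Domain M \<Longrightarrow> b' \<notin> Range M \<Longrightarrow>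
    is_matching (insert (a', b) (insert (a, b') (M - {(a, b)})))"
  unfolding is_matching_def by (auto; blast)

lemma partner_L_in:
  assumes "is_matching M" "a \<in> Domain M"
  shows "(a, partner_L M a) \<in> M"
proof -
  from assms(2) obtain b where "(a, b) \<in> M" by blast
  with assms(1) show ?thesis
    unfolding partner_L_def by (rule_tac theI[of _ b]) (auto simp: is_matching_def)
qed

lemma partner_R_in:
  assumes "is_matching M" "b \<in> Range M"
  shows "(partner_R M b, b) \<in> M"
proof -
  from assms(2) obtain a where "(a, b) \<in> M" by blast
  with assms(1) show ?thesis
    unfolding partner_R_def by (rule_tac theI[of _ a]) (auto simp: is_matching_def)
qed

lemma left_perfect_partner_L:
  assumes "left_perfect A R M" "a \<in> A"
  shows "partner_L M a \<in> R"
proof -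
  have "is_matching M" "a \<in> Domain M"
    using assms unfolding left_perfect_def by auto
  then have "(a, partner_L M a) \<in> M"
    by (rule partner_L_in)
  with assms(1) show ?thesis
    unfolding left_perfect_def by blast
qed

lemma card_Range_eq_card_Domain:
  assumes "is_matching M"
  shows "card (Range M) = card (Domain M)"
proof -
  have "inj_on fst M" "inj_on snd M"
    using assms unfolding is_matching_def inj_on_def by force+
  then show ?thesis
    by (simp add: Domain_fst Range_snd card_image)
qed

lemma R_exp_nonempty:
  assumes "finite R" "finite X" "card X < card R" "is_matching M" "M \<subseteq> X \<times> R"
  shows "R_exp R M \<noteq> {}"
proof
  assume "R_exp R M = {}"
  then have "R = Range M"
    using assms(5) unfolding R_exp_def by blast
  also have "card (Range M) = card (Domain M)"
    using assms(4) by (rule card_Range_eq_card_Domain)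
  also have "\<dots> \<le> card X"
    using assms(2,5) by (intro card_mono) auto
  finally show False
    using assms(3) by simp
qed

lemma symdiff_insert_new: "(a, b) \<notin> M \<Longrightarrow> symdiff M {(a, b)} = insert (a, b) M"
  unfolding symdiff_def by blast

lemma symdiff_swap:
  "(a, b) \<in> M \<Longrightarrow> a' \<notin> Domain M \<Longrightarrow> b' \<notin> Range M \<Longrightarrow>
    symdiff M {(a', b), (a, b), (a, b')} = insert (a', b) (insert (a, b') (M - {(a, b)}))"
  unfolding symdiff_def by blast

lemma mweight_insert:
  "finite M \<Longrightarrow> (a, b) \<notin> M \<Longrightarrow> mweight w (insert (a, b) M) = w a b + mweight w M"
  by (simp add: mweight_def)

lemma mweight_remove:
  "finite M \<Longrightarrow> (a, b) \<in> M \<Longrightarrow> mweight w (M - {(a, b)}) = mweight w M - w a b"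
  by (simp add: mweight_def sum_diff1)

lemma pedges_singleton [simp]: "pedges [x] = {}"
  by (simp add: pedges_def)

lemma pedges_Cons_Cons [simp]: "pedges (x # y # xs) = insert (to_pair x y) (pedges (y # xs))"
proof -
  have mem: "e \<in> pedges zs \<longleftrightarrow> (\<exists>i < length zs - 1. e = to_pair (zs ! i) (zs ! Suc i))"
    for e and zs :: "('a + 'b) list"
    unfolding pedges_def by (fastforce simp: less_diff_conv)
  show ?thesis
    by (rule set_eqI) (simp add: mem Ex_less_Suc2)
qed

lemma is_edge_Inl_Inr [simp]: "is_edge A R (Inl a) (Inr b) \<longleftrightarrow> a \<in> A \<and> b \<in> R"
  by (auto simp: is_edge_def)

lemma is_edge_Inr_Inl [simp]: "is_edge A R (Inr b) (Inl a) \<longleftrightarrow> a \<in> A \<and> b \<in> R"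
  by (auto simp: is_edge_def)

lemma is_edge_cases:
  assumes "is_edge A R x y"
  obtains a b where "a \<in> A" "b \<in> R" "x = Inl a" "y = Inr b"
    | a b where "a \<in> A" "b \<in> R" "x = Inr b" "y = Inl a"
  using assms unfolding is_edge_def by blast

lemma augmenting_path_two_vertices:
  assumes "augmenting_path A R M [x0, x1]"
  obtains a b
  where "a \<in> A" "b \<in> R" "a \<notin> Domain M" "b \<notin> Range M" "pedges [x0, x1] = {(a, b)}"
proof -
  have "is_edge A R x0 x1" "\<not> covered M x0" "\<not> covered M x1"
    using assms unfolding augmenting_path_def by (auto dest: spec[of _ 0])
  then show ?thesis
    by (elim is_edge_cases) (auto simp: covered_def intro: that)
qed

lemma no_augmenting_path_three_vertices: "\<not> augmenting_path A R M [x0, x1, x2]"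
proof
  assume "augmenting_path A R M [x0, x1, x2]"
  then have "is_edge A R x1 x2" "to_pair x1 x2 \<in> M" "\<not> covered M x2"
    unfolding augmenting_path_def by (auto dest: spec[of _ 1])
  then show False
    by (elim is_edge_cases) (auto simp: covered_def)
qed

lemma augmenting_path_four_vertices:
  assumes "augmenting_path A R M [x0, x1, x2, x3]"
  obtains a b a' b' where "a \<in> A" "b \<in> R" "a' \<in> A" "b' \<in> R" "(a, b) \<in> M"
    "a' \<notin> Domain M" "b' \<notin> Range M" "pedges [x0, x1, x2, x3] = {(a', b), (a, b), (a, b')}"
proof -
  let ?P = "[x0, x1, x2, x3]"
  have step: "is_edge A R (?P ! i) (?P ! Suc i) \<and>
      (to_pair (?P ! i) (?P ! Suc i) \<in> M \<longleftrightarrow> odd i)" if "i < 3" for i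
    using assms that unfolding augmenting_path_def by auto
  have "is_edge A R x0 x1" "to_pair x0 x1 \<notin> M" "is_edge A R x1 x2" "to_pair x1 x2 \<in> M"
    "is_edge A R x2 x3" "to_pair x2 x3 \<notin> M"
    using step[of 0] step[of 1] step[of 2] by (simp_all add: numeral_eq_Suc)
  moreover have "\<not> covered M x0" "\<not> covered M x3"
    using assms unfolding augmenting_path_def by simp_all
  ultimately show ?thesis
    by (elim is_edge_cases) (auto simp: covered_def insert_commute intro: that)
qed

lemma short_augmenting_path_cases:
  assumes "augmenting_path A R M P" "length P \<le> 4"
  obtains (single) a b where "a \<in> A" "b \<in> R" "a \<notin> Domain M" "b \<notin> Range M"
      "pedges P = {(a, b)}"
    | (swap) a b a' b' where "a \<in> A" "b \<in> R" "a' \<in> A" "b' \<in> R" "(a, b) \<in> M"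
      "a' \<notin> Domain M" "b' \<notin> Range M" "pedges P = {(a', b), (a, b), (a, b')}"
proof -
  have "length P \<in> {2, 3, 4}"
    using assms unfolding augmenting_path_def by auto
  then consider x0 x1 where "P = [x0, x1]" | x0 x1 x2 where "P = [x0, x1, x2]"
    | x0 x1 x2 x3 where "P = [x0, x1, x2, x3]"
    by (auto simp: length_Suc_conv numeral_eq_Suc)
  then show ?thesis
  proof cases
    case 1
    show ?thesis
      using assms(1) unfolding 1 by (elim augmenting_path_two_vertices) (rule single, auto simp: 1)
  next
    case 2
    then show ?thesis
      using assms(1) no_augmenting_path_three_vertices by blast
  next
    case 3
    show ?thesis
      using assms(1) unfolding 3 by (elim augmenting_path_four_vertices) (rule swap, auto simp: 3)
  qed
qed

lemma symdiff_short_augmenting_path: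
  assumes "is_matching M" "M \<subseteq> A \<times> R" "augmenting_path A R M P" "length P \<le> 4"
  shows "is_matching (symdiff M (pedges P)) \<and> symdiff M (pedges P) \<subseteq> A \<times> R"
  using assms(3,4)
proof (cases rule: short_augmenting_path_cases)
  case (single a b)
  then have "(a, b) \<notin> M"
    by blast
  with single have "symdiff M (pedges P) = insert (a, b) M"
    by (simp add: symdiff_insert_new)
  then show ?thesis
    using single assms(1,2) is_matching_insert by simp
next
  case (swap a b a' b')
  then have "symdiff M (pedges P) = insert (a', b) (insert (a, b') (M - {(a, b)}))"
    by (simp add: symdiff_swap)
  moreover have "a \<in> A" "b \<in> R"
    using swap(5) assms(2) by auto
  ultimately show ?thesis
    using swap assms(1,2) is_matching_swap by auto
qed

lemma alg_step_matching:
  assumes "is_matching M" "M \<subseteq> A \<times> R" "alg_step A R w ut M M'"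
  shows "is_matching M' \<and> M' \<subseteq> A \<times> R"
proof -
  obtain P where "candidate A R M ut P" and M': "M' = symdiff M (pedges P)"
    using assms(3) unfolding alg_step_def by blast
  then have "augmenting_path A R M P" "length P \<le> 4"
    unfolding candidate_def by auto
  then show ?thesis
    unfolding M' by (rule symdiff_short_augmenting_path[OF assms(1,2)])
qed

lemma alg_run_matching:
  assumes "alg_run n u R w Ms" "t \<in> {1..n}"
  shows "is_matching (Ms t) \<and> Ms t \<subseteq> u ` {1..<t} \<times> R"
proof -
  have "is_matching (Ms (Suc k)) \<and> Ms (Suc k) \<subseteq> u ` {1..k} \<times> R" if "k < n" for k
    using that
  proof (induction k)
    case 0
    then show ?case
      using assms(1) by (simp add: alg_run_def is_matching_empty)
  next
    case (Suc k)
    have "u ` {1..k} \<times> R \<subseteq> u ` {1..Suc k} \<times> R"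
      by (intro Sigma_mono image_mono) auto
    with Suc have "is_matching (Ms (Suc k))" "Ms (Suc k) \<subseteq> u ` {1..Suc k} \<times> R"
      by auto
    moreover have "alg_step (u ` {1..Suc k}) R w (u (Suc k)) (Ms (Suc k)) (Ms (Suc (Suc k)))"
      using assms(1) Suc.prems unfolding alg_run_def by simp
    ultimately show ?case
      by (rule alg_step_matching)
  qed
  with assms(2) show ?thesis
    by (cases t) (auto simp: atLeastLessThanSuc_atLeastAtMost)
qed

lemma arrival_unmatched:
  fixes t :: nat
  assumes "inj_on u {1..n}" "t \<in> {1..n}" "M \<subseteq> u ` {1..<t} \<times> R"
  shows "u t \<notin> Domain M"
proof
  assume "u t \<in> Domain M"
  with assms(3) have "u t \<in> u ` {1..<t}"
    by auto
  moreover have "{1..<t} \<subseteq> {1..n}"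
    using assms(2) by auto
  ultimately show False
    using inj_on_image_mem_iff[OF assms(1)] assms(2) by auto
qed

lemma candidate_single_edge:
  "a \<in> A \<Longrightarrow> b \<in> R \<Longrightarrow> a \<notin> Domain M \<Longrightarrow> b \<notin> Range M \<Longrightarrow>
    candidate A R M a [Inl a, Inr b]"
  by (auto simp: candidate_def augmenting_path_def covered_def)

lemma candidate_swap:
  assumes "a' \<in> A" "b \<in> R" "a \<in> A" "b' \<in> R" "(a, b) \<in> M" "a' \<notin> Domain M" "b' \<notin> Range M"
  shows "candidate A R M a' [Inl a', Inr b, Inl a, Inr b']"
proof -
  have "a' \<noteq> a" "b \<noteq> b'" "(a', b) \<notin> M" "(a, b') \<notin> M"
    using assms(5-7) by auto
  with assms show ?thesis
    by (simp add: candidate_def augmenting_path_def covered_def All_less_Suc2 numeral_eq_Suc)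
qed

lemma path_gain_single_edge:
  "finite M \<Longrightarrow> (a, b) \<notin> M \<Longrightarrow> path_gain w M [Inl a, Inr b] = w a b"
  by (simp add: path_gain_def symdiff_insert_new mweight_insert)

lemma path_gain_swap:
  assumes "finite M" "(a, b) \<in> M" "a' \<notin> Domain M" "b' \<notin> Range M"
  shows "path_gain w M [Inl a', Inr b, Inl a, Inr b'] = w a' b - (w a b - w a b')"
proof -
  let ?M0 = "M - {(a, b)}"
  have fin: "finite ?M0" "finite (insert (a, b') ?M0)"
    using assms(1) by auto
  have new: "(a, b') \<notin> ?M0" "(a', b) \<notin> insert (a, b') ?M0"
    using assms by auto
  have "symdiff M (pedges [Inl a', Inr b, Inl a, Inr b'])
      = insert (a', b) (insert (a, b') ?M0)"
    using assms(2-4) by (simp add: symdiff_swap)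
  moreover have
    "mweight w (insert (a', b) (insert (a, b') ?M0)) = w a' b + (w a b' + (mweight w M - w a b))"
    unfolding mweight_insert[OF fin(2) new(2)] mweight_insert[OF fin(1) new(1)]
      mweight_remove[OF assms(1,2)] ..
  ultimately show ?thesis
    unfolding path_gain_def by simp
qed

lemma alg_step_gain_lower_bound:
  assumes "finite A" "finite R" "is_matching M" "M \<subseteq> A \<times> R" "ut \<in> A" "ut \<notin> Domain M"
    "R_exp R M \<noteq> {}" "v \<in> R" "alg_step A R w ut M M'"
  shows "w ut v - loss R w M v \<le> mweight w M' - mweight w M"
proof -
  obtain P where best: "\<And>Q. candidate A R M ut Q \<Longrightarrow> path_gain w M Q \<le> path_gain w M P"
    and M': "M' = symdiff M (pedges P)"
    using assms(9) unfolding alg_step_def by blast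
  have gain: "path_gain w M Q \<le> mweight w M' - mweight w M" if "candidate A R M ut Q" for Q
    using best[OF that] unfolding M' path_gain_def .
  have "finite M"
    using assms(4) by (rule finite_subset) (simp add: assms(1,2))
  show ?thesis
  proof (cases "v \<in> Range M")
    case False
    have "(ut, v) \<notin> M"
      using assms(6) by blast
    then show ?thesis
      using gain[OF candidate_single_edge[OF assms(5,8,6) False]] False
      by (simp add: path_gain_single_edge \<open>finite M\<close> loss_def)
  next
    case True
    define a where "a = partner_R M v"
    have av: "(a, v) \<in> M"
      unfolding a_def using assms(3) True by (rule partner_R_in)
    have "finite (R_exp R M)"
      using assms(2) by (simp add: R_exp_def)
    then have "Max ((\<lambda>v'. w a v') ` R_exp R M) \<in> (\<lambda>v'. w a v') ` R_exp R M"
      using assms(7) by simp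
    then obtain v' where v': "v' \<in> R_exp R M" "Max ((\<lambda>v'. w a v') ` R_exp R M) = w a v'"
      by blast
    then have loss: "loss R w M v = w a v - w a v'"
      using True assms(7) by (simp add: loss_def a_def)
    have "v' \<in> R" "v' \<notin> Range M"
      using v'(1) by (auto simp: R_exp_def)
    moreover have "a \<in> A"
      using av assms(4) by auto
    ultimately have "candidate A R M ut [Inl ut, Inr v, Inl a, Inr v']"
      using assms(5,6,8) av by (intro candidate_swap)
    moreover have "path_gain w M [Inl ut, Inr v, Inl a, Inr v'] = w ut v - (w a v - w a v')"
      using \<open>finite M\<close> av assms(6) \<open>v' \<notin> Range M\<close> by (rule path_gain_swap)
    ultimately show ?thesis
      using gain loss by fastforce
  qed
qed

theorem lemma3:
  fixes n :: nat and u :: "nat \<Rightarrow> 'l" and R :: "'r set"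
    and w :: "'l \<Rightarrow> 'r \<Rightarrow> rat" and Ms :: "nat \<Rightarrow> ('l \<times> 'r) set"
    and Mstar :: "('l \<times> 'r) set" and t :: nat
  assumes "finite R"
    and "n \<le> card R"
    and "inj_on u {1..n}"
    and "\<forall>a\<in>u ` {1..n}. \<forall>b\<in>R. 0 \<le> w a b"
    and "alg_run n u R w Ms"
    and "left_perfect (u ` {1..n}) R Mstar"
    and "\<forall>M. left_perfect (u ` {1..n}) R M \<longrightarrow> mweight w M \<le> mweight w Mstar"
    and "t \<in> {1..n}"
  shows "mweight w (Ms (Suc t)) - mweight w (Ms t)
           \<ge> w (u t) (partner_L Mstar (u t)) - loss R w (Ms t) (partner_L Mstar (u t))"
proof -
  have matching: "is_matching (Ms t)" "Ms t \<subseteq> u ` {1..<t} \<times> R"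
    using alg_run_matching[OF assms(5,8)] by auto
  have "card (u ` {1..<t}) < card R"
    using card_image_le[of "{1..<t}" u] assms(2,8) by auto
  then have "R_exp R (Ms t) \<noteq> {}"
    using R_exp_nonempty[OF assms(1) _ _ matching] by simp
  moreover have "Ms t \<subseteq> u ` {1..t} \<times> R"
    using matching(2) by (rule order_trans) (intro Sigma_mono image_mono; auto)
  moreover have "alg_step (u ` {1..t}) R w (u t) (Ms t) (Ms (Suc t))"
    using assms(5,8) by (simp add: alg_run_def)
  ultimately show ?thesis
    using assms(8) arrival_unmatched[OF assms(3,8) matching(2)]
      left_perfect_partner_L[OF assms(6)]
    by (intro alg_step_gain_lower_bound[OF _ assms(1) matching(1)]) auto
qed

end
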